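(* Let $G=(V,E)$ be a graph, let $W\subseteq V$ be a vertex cover of $G$, and let $S\subseteq V$ be a minimal separator of $G$. Let $(D_1,S,D_2)$ be a partition of $V$ such that each of $D_1$ and $D_2$ is a union of connected components of $G-S$, and each of $D_1$ and $D_2$ contains at least one full component associated to $S$. Put $D_1^W=D_1\cap W$ and $D_2^W=D_2\cap W$. Then $$S\setminus W=\{x\in V\setminus W \mid N(x)\cap D_1^W\neq\emptyset \text{ and } N(x)\cap D_2^W\neq\emptyset\}.$$
   Context: All graphs are finite, simple and undirected. $N(x)$ is the open neighborhood of $x$; for $S\subseteq V$, $N(S)=\bigcup_{v\in S}N(v)\setminus S$; $G-S$ is the subgraph induced by $V\setminus S$. A connected component is the vertex set of a maximal connected induced subgraph. A vertex set $W$ is a vertex cover if every edge has an endpoint in $W$. For vertices $u,v$, a set $S$ is a $u,v$-separator if $u,v$ lie in different components of $G-S$; it is a minimal $u,v$-separator if it is inclusion-minimal among $u,v$-separators; $S$ is a minimal separator of $G$ if it is a minimal $u,v$-separator for some $u,v$. A component $C$ of $G-S$ is a full component associated to $S$ if $N(C)=S$. *)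

theory Defs
  imports Main
begin

definition graph :: "'a set \<Rightarrow> 'a set set \<Rightarrow> bool" where
  "graph V E \<longleftrightarrow> finite V \<and> (\<forall>e\<in>E. e \<subseteq> V \<and> card e = 2)"

definition nbr :: "'a set set \<Rightarrow> 'a \<Rightarrow> 'a set" where
  "nbr E x = {y. {x, y} \<in> E}"

definition nbrs :: "'a set set \<Rightarrow> 'a set \<Rightarrow> 'a set" where
  "nbrs E S = (\<Union>v\<in>S. nbr E v) - S"

definition conn_in :: "'a set set \<Rightarrow> 'a set \<Rightarrow> 'a \<Rightarrow> 'a \<Rightarrow> bool" where
  "conn_in E U u v \<longleftrightarrow> u \<in> U \<and> v \<in> U \<and>
     (\<lambda>x y. x \<in> U \<and> y \<in> U \<and> {x, y} \<in> E)\<^sup>*\<^sup>* u v"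

definition components :: "'a set \<Rightarrow> 'a set set \<Rightarrow> 'a set \<Rightarrow> 'a set set" where
  "components V E S = {{v. conn_in E (V - S) u v} | u. u \<in> V - S}"

definition separator :: "'a set \<Rightarrow> 'a set set \<Rightarrow> 'a \<Rightarrow> 'a \<Rightarrow> 'a set \<Rightarrow> bool" where
  "separator V E u v S \<longleftrightarrow> S \<subseteq> V \<and> u \<in> V - S \<and> v \<in> V - S \<and> \<not> conn_in E (V - S) u v"

definition minimal_separator_uv :: "'a set \<Rightarrow> 'a set set \<Rightarrow> 'a \<Rightarrow> 'a \<Rightarrow> 'a set \<Rightarrow> bool" where
  "minimal_separator_uv V E u v S \<longleftrightarrow> separator V E u v S \<and>
     (\<forall>T. T \<subset> S \<longrightarrow> \<not> separator V E u v T)"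

definition minimal_separator :: "'a set \<Rightarrow> 'a set set \<Rightarrow> 'a set \<Rightarrow> bool" where
  "minimal_separator V E S \<longleftrightarrow> (\<exists>u v. minimal_separator_uv V E u v S)"

definition full_component :: "'a set \<Rightarrow> 'a set set \<Rightarrow> 'a set \<Rightarrow> 'a set \<Rightarrow> bool" where
  "full_component V E S C \<longleftrightarrow> C \<in> components V E S \<and> nbrs E C = S"

definition vertex_cover :: "'a set \<Rightarrow> 'a set set \<Rightarrow> 'a set \<Rightarrow> bool" where
  "vertex_cover V E W \<longleftrightarrow> W \<subseteq> V \<and> (\<forall>e\<in>E. e \<inter> W \<noteq> {})"

end

theory Submission
  imports Defs
begin

text \<open>A vertex x of S outside the cover W lies in N(C) for the full components C in D1 and D2;
  the edge from x to C must be covered, so its endpoint in C lies in W. Conversely, no edge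
  leaves a component of G - S, so a vertex outside S adjacent to D1 would lie in D1 together
  with all its neighbours outside S, and could not be adjacent to D2 as well.\<close>

lemma components_subset: "K \<in> components V E S \<Longrightarrow> K \<subseteq> V - S"
  unfolding components_def conn_in_def by blast

lemma component_closed_under_edge:
  assumes "K \<in> components V E S" and "x \<in> K" and "y \<in> V - S" and "{x, y} \<in> E"
  shows "y \<in> K"
proof -
  from assms(1) obtain u where K: "K = {v. conn_in E (V - S) u v}"
    unfolding components_def by blast
  with assms(2) have ux: "conn_in E (V - S) u x" by simp
  then have "(\<lambda>x y. x \<in> V - S \<and> y \<in> V - S \<and> {x, y} \<in> E)\<^sup>*\<^sup>* u y"
    using assms(3,4) unfolding conn_in_def by (auto intro: rtranclp.rtrancl_into_rtrancl)
  with K ux assms(3) show ?thesis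
    unfolding conn_in_def by simp
qed

lemma Union_components_closed_under_edge:
  assumes "\<C> \<subseteq> components V E S" and "x \<in> \<Union>\<C>" and "y \<in> V - S" and "{x, y} \<in> E"
  shows "y \<in> \<Union>\<C>"
proof -
  from assms(2) obtain K where K: "K \<in> \<C>" and "x \<in> K" by blast
  from K assms(1) have "K \<in> components V E S" by blast
  from component_closed_under_edge[OF this \<open>x \<in> K\<close> assms(3,4)] K
  show ?thesis by blast
qed

lemma common_neighbour_of_disjoint_Unions_components_in_separator:
  assumes \<C>1: "\<C>1 \<subseteq> components V E S" and \<C>2: "\<C>2 \<subseteq> components V E S"
    and disjoint: "\<Union>\<C>1 \<inter> \<Union>\<C>2 = {}"
    and a: "a \<in> \<Union>\<C>1" "{x, a} \<in> E" and b: "b \<in> \<Union>\<C>2" "{x, b} \<in> E" and "x \<in> V"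
  shows "x \<in> S"
proof (rule ccontr)
  assume "x \<notin> S"
  have "{a, x} \<in> E"
    using a(2) by (simp add: insert_commute)
  from Union_components_closed_under_edge[OF \<C>1 a(1) _ this] have "x \<in> \<Union>\<C>1"
    using \<open>x \<in> V\<close> \<open>x \<notin> S\<close> by blast
  moreover have "b \<in> V - S"
    using b(1) \<C>2 components_subset by blast
  ultimately have "b \<in> \<Union>\<C>1"
    using Union_components_closed_under_edge[OF \<C>1 _ _ b(2)] by blast
  with b(1) disjoint show False by blast
qed

lemma full_component_covered_neighbour:
  assumes "full_component V E S C" and "vertex_cover V E W" and "x \<in> S - W"
  shows "nbr E x \<inter> (C \<inter> W) \<noteq> {}"
proof -
  from assms(1,3) have "x \<in> nbrs E C"
    unfolding full_component_def by blast
  then obtain v where "v \<in> C" and vx: "{v, x} \<in> E"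
    unfolding nbrs_def nbr_def by blast
  moreover have "v \<in> W"
    using assms(2,3) vx unfolding vertex_cover_def by auto
  moreover have "v \<in> nbr E x"
    using vx unfolding nbr_def by (simp add: insert_commute)
  ultimately show ?thesis
    by blast
qed

theorem lemma1:
  fixes V :: "'a set" and E :: "'a set set" and W S D1 D2 :: "'a set"
  assumes "graph V E"
    and "vertex_cover V E W"
    and "minimal_separator V E S"
    and "D1 \<union> S \<union> D2 = V" and "D1 \<inter> S = {}" and "D2 \<inter> S = {}" and "D1 \<inter> D2 = {}"
    and "\<exists>\<C>. \<C> \<subseteq> components V E S \<and> D1 = \<Union>\<C>"
    and "\<exists>\<C>. \<C> \<subseteq> components V E S \<and> D2 = \<Union>\<C>"
    and "\<exists>C. full_component V E S C \<and> C \<subseteq> D1"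
    and "\<exists>C. full_component V E S C \<and> C \<subseteq> D2"
  shows "S - W = {x \<in> V - W. nbr E x \<inter> (D1 \<inter> W) \<noteq> {} \<and> nbr E x \<inter> (D2 \<inter> W) \<noteq> {}}"
proof (intro equalityI subsetI)
  fix x assume x: "x \<in> S - W"
  obtain C1 C2 where C1: "full_component V E S C1" "C1 \<subseteq> D1"
    and C2: "full_component V E S C2" "C2 \<subseteq> D2"
    using assms(10,11) by blast
  have "nbr E x \<inter> (D1 \<inter> W) \<noteq> {}"
    using full_component_covered_neighbour[OF C1(1) assms(2) x] C1(2) by blast
  moreover have "nbr E x \<inter> (D2 \<inter> W) \<noteq> {}"
    using full_component_covered_neighbour[OF C2(1) assms(2) x] C2(2) by blast
  moreover have "x \<in> V"
    using x assms(4) by blast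
  ultimately show "x \<in> {x \<in> V - W. nbr E x \<inter> (D1 \<inter> W) \<noteq> {} \<and> nbr E x \<inter> (D2 \<inter> W) \<noteq> {}}"
    using x by blast
next
  fix x assume x: "x \<in> {x \<in> V - W. nbr E x \<inter> (D1 \<inter> W) \<noteq> {} \<and> nbr E x \<inter> (D2 \<inter> W) \<noteq> {}}"
  then obtain a b where a: "a \<in> D1" "{x, a} \<in> E" and b: "b \<in> D2" "{x, b} \<in> E"
    unfolding nbr_def by blast
  obtain \<C>1 \<C>2 where \<C>1: "\<C>1 \<subseteq> components V E S" "D1 = \<Union>\<C>1"
    and \<C>2: "\<C>2 \<subseteq> components V E S" "D2 = \<Union>\<C>2"
    using assms(8,9) by blast
  from x have "x \<in> V" by blast
  from common_neighbour_of_disjoint_Unions_components_in_separator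
    [OF \<C>1(1) \<C>2(1) assms(7)[unfolded \<C>1(2) \<C>2(2)]
      a[unfolded \<C>1(2)] b[unfolded \<C>2(2)] this]
  show "x \<in> S - W"
    using x by blast
qed

end
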